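(* Let $\theta_\star\in\mathbb{R}^d$ be fixed, let $\Sigma=\mathbb{E}[XX^\top]=\sum_{j=1}^d\lambda_j(\Sigma)v_jv_j^\top$ with $(v_j)_{j\in[d]}$ an orthonormal eigenbasis, and assume the components $(v_j^\top X)_{j\in[d]}$ are independent and each symmetric. Let $\hat f(x)=\sum_{i=1}^n l_i(x,(X_k)_{k\in[n]})Y_i$ be a linear prediction rule such that for every orthogonal matrix $O$, $l_i(x,(X_k)_{k\in[n]})=l_i(Ox,(OX_k)_{k\in[n]})$ almost surely. Let $\nu$ be the law of $\sum_{j=1}^d\varepsilon_j(v_j^\top\theta_\star)v_j$ with $\varepsilon_j$ i.i.d. Rademacher, so that $H=\mathbb{E}_\nu[\theta\theta^\top]=\sum_j(v_j^\top\theta_\star)^2v_jv_j^\top$ and $\Sigma_{\theta_\star}:=H^{1/2}\Sigma H^{1/2}=\sum_{j\in[d]}\lambda_j(\Sigma)(v_j^\top\theta_\star)^2v_jv_j^\top$. Then $$\mathcal{E}_{\sigma^2}(\hat f)\ge\bar{\mathcal{E}}(\Sigma_{\theta_\star};\sigma^2),$$ where $\bar{\mathcal{E}}(\Sigma_{\theta_\star};\sigma^2)=\inf_{\hat g}\mathbb{E}_{\theta\sim\nu}[\mathcal{E}_{\sigma^2}(\hat g)]$.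
   Context: Setting: $(X,Y)\in\mathbb{R}^d\times\mathbb{R}$ satisfies $Y=X^\top\theta+\epsilon$ with $\mathbb{E}[\epsilon\mid X]=0$, $\mathbb{E}[\epsilon^2\mid X]=\sigma^2$, for a parameter $\theta$ ($\theta=\theta_\star$ on the left-hand side). Training data $(X_i,Y_i)_{i\in[n]}$ are i.i.d. copies of $(X,Y)$, independent of a test pair. A linear prediction rule is $\hat g(x)=\sum_{i=1}^n l_i(x)Y_i$ with each $l_i$ a (possibly random) function of $x$, $(X_i)_{i\in[n]}$ and independent randomness. $R(f)=\mathbb{E}[(Y-f(X))^2]$, $\mathcal{E}_{\sigma^2}(\hat g)=\mathbb{E}[R(\hat g)]-\sigma^2$ (expectation over training data). The infimum defining $\bar{\mathcal{E}}$ is over all linear prediction rules, with $\theta\sim\nu$ drawn independently of the data. *)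

theory Defs
  imports "HOL-Probability.Probability"
begin

text \<open>Joint law of the covariate X (law PX) and the noise e, where K x is the
  conditional law of the noise given X = x.\<close>
definition noise_joint :: "(real^'d) measure \<Rightarrow> (real^'d \<Rightarrow> real measure) \<Rightarrow> ((real^'d) \<times> real) measure" where
  "noise_joint PX K = PX \<bind> (\<lambda>x. distr (K x) (borel \<Otimes>\<^sub>M borel) (\<lambda>e. (x, e)))"

definition data_law :: "(real^'d) measure \<Rightarrow> (real^'d \<Rightarrow> real measure) \<Rightarrow> real^'d \<Rightarrow> ((real^'d) \<times> real) measure" where
  "data_law PX K \<theta> = distr (noise_joint PX K) (borel \<Otimes>\<^sub>M borel) (\<lambda>(x, e). (x, x \<bullet> \<theta> + e))"

text \<open>Linear prediction rule: g(x) = sum_i l_i(x, (X_k)_k, u) Y_i, with u the independent randomness.\<close>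
definition lin_pred :: "nat \<Rightarrow> (nat \<Rightarrow> real^'d \<Rightarrow> (nat \<Rightarrow> real^'d) \<Rightarrow> 'u \<Rightarrow> real)
    \<Rightarrow> (nat \<Rightarrow> (real^'d) \<times> real) \<Rightarrow> 'u \<Rightarrow> real^'d \<Rightarrow> real" where
  "lin_pred n l S u x = (\<Sum>i<n. l i x (restrict (\<lambda>k. fst (S k)) {..<n}) u * snd (S i))"

definition is_linear_rule :: "nat \<Rightarrow> 'u measure \<Rightarrow> (nat \<Rightarrow> real^'d \<Rightarrow> (nat \<Rightarrow> real^'d) \<Rightarrow> 'u \<Rightarrow> real) \<Rightarrow> bool" where
  "is_linear_rule n U l \<longleftrightarrow> prob_space U \<and>
     (\<forall>i<n. (\<lambda>(x, Xs, u). l i x Xs u) \<in> borel \<Otimes>\<^sub>M (PiM {..<n} (\<lambda>_. borel) \<Otimes>\<^sub>M U) \<rightarrow>\<^sub>M borel)"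

text \<open>E[R(g)]: expectation over the n i.i.d. training pairs and the randomness of the
  risk R(g) = E[(Y - g(X))^2] on an independent test pair.\<close>
definition exp_risk :: "nat \<Rightarrow> (real^'d) measure \<Rightarrow> (real^'d \<Rightarrow> real measure) \<Rightarrow> 'u measure
    \<Rightarrow> (nat \<Rightarrow> real^'d \<Rightarrow> (nat \<Rightarrow> real^'d) \<Rightarrow> 'u \<Rightarrow> real) \<Rightarrow> real^'d \<Rightarrow> ennreal" where
  "exp_risk n PX K U l \<theta> =
     (\<integral>\<^sup>+ (S, u). (\<integral>\<^sup>+ (x, y). ennreal ((y - lin_pred n l S u x)^2) \<partial>data_law PX K \<theta>)
        \<partial>(PiM {..<n} (\<lambda>_. data_law PX K \<theta>) \<Otimes>\<^sub>M U))"

definition excess_risk :: "nat \<Rightarrow> (real^'d) measure \<Rightarrow> (real^'d \<Rightarrow> real measure) \<Rightarrow> real \<Rightarrow> 'u measure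
    \<Rightarrow> (nat \<Rightarrow> real^'d \<Rightarrow> (nat \<Rightarrow> real^'d) \<Rightarrow> 'u \<Rightarrow> real) \<Rightarrow> real^'d \<Rightarrow> ereal" where
  "excess_risk n PX K sig2 U l \<theta> = enn2ereal (exp_risk n PX K U l \<theta>) - ereal sig2"

definition avg_excess_risk :: "nat \<Rightarrow> (real^'d) measure \<Rightarrow> (real^'d \<Rightarrow> real measure) \<Rightarrow> real \<Rightarrow> (real^'d) measure
    \<Rightarrow> 'u measure \<Rightarrow> (nat \<Rightarrow> real^'d \<Rightarrow> (nat \<Rightarrow> real^'d) \<Rightarrow> 'u \<Rightarrow> real) \<Rightarrow> ereal" where
  "avg_excess_risk n PX K sig2 \<nu> U l = enn2ereal (\<integral>\<^sup>+ \<theta>. exp_risk n PX K U l \<theta> \<partial>\<nu>) - ereal sig2"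

definition bayes_lin_risk :: "nat \<Rightarrow> (real^'d) measure \<Rightarrow> (real^'d \<Rightarrow> real measure) \<Rightarrow> real \<Rightarrow> (real^'d) measure
    \<Rightarrow> 'v itself \<Rightarrow> ereal" where
  "bayes_lin_risk n PX K sig2 \<nu> (_ :: 'v itself) =
     (INF Ul \<in> {(V :: 'v measure, g). is_linear_rule n V g}. avg_excess_risk n PX K sig2 \<nu> (fst Ul) (snd Ul))"

definition rademacher_law :: "real measure" where
  "rademacher_law = measure_pmf (pmf_of_set {-1, 1})"

definition prior_nu :: "('d::finite \<Rightarrow> real^'d) \<Rightarrow> real^'d \<Rightarrow> (real^'d) measure" where
  "prior_nu v \<theta>s = distr (PiM (UNIV :: 'd set) (\<lambda>_. rademacher_law)) borel
      (\<lambda>\<epsilon>. \<Sum>j\<in>UNIV. (\<epsilon> j * (v j \<bullet> \<theta>s)) *\<^sub>R v j)"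

definition second_moment :: "(real^'d) measure \<Rightarrow> real^'d^'d" where
  "second_moment PX = (\<chi> a b. \<integral> x. x $ a * x $ b \<partial>PX)"

definition outer :: "real^'d \<Rightarrow> real^'d^'d" where
  "outer w = (\<chi> a b. w $ a * w $ b)"

end

theory Submission
  imports Defs
begin

text \<open>Once the noise is integrated out, the expected risk of a linear rule is the integral,
  over the test covariate, the training covariates and the internal randomness, of the squared
  bias plus \<open>\<sigma>\<^sup>2 (1 + \<Sum>\<^sub>i l\<^sub>i\<^sup>2)\<close>. If an orthogonal map \<open>T\<close> preserves the law of \<open>X\<close>, the orthogonal
  invariance of the rule turns this integral at \<open>\<theta>\<close> into the same integral at \<open>T \<theta>\<close>. The reflections
  \<open>x \<mapsto> \<Sum>\<^sub>j \<plusminus>(v\<^sub>j \<bullet> x) v\<^sub>j\<close> are such maps because the coordinates \<open>v\<^sub>j \<bullet> X\<close> are independent and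
  symmetric, and the prior \<open>\<nu>\<close> is carried by the orbit of \<open>\<theta>\<^sub>\<star>\<close> under them; so the \<open>\<nu>\<close>-average risk
  of the rule is its risk at \<open>\<theta>\<^sub>\<star>\<close>. Fixing the internal randomness at a value whose average risk
  is at most the mean gives a rule that competes in the infimum.\<close>

lemma (in prob_space) exists_le_nn_integral:
  assumes [measurable]: "f \<in> borel_measurable M"
  shows "\<exists>x\<in>space M. f x \<le> (\<integral>\<^sup>+y. f y \<partial>M)"
proof (rule ccontr)
  let ?I = "\<integral>\<^sup>+y. f y \<partial>M"
  assume "\<not> ?thesis"
  then have less: "?I < f x" if "x \<in> space M" for x
    using that by (auto simp: not_le)
  show False
  proof (cases "?I = \<infinity>")
    case True
    obtain x where "x \<in> space M" using not_empty by blast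
    with less[OF this] True show False by simp
  next
    case False
    have "(\<integral>\<^sup>+x. ?I \<partial>M) < ?I"
    proof (rule nn_integral_less)
      show "(\<integral>\<^sup>+x. ?I \<partial>M) \<noteq> \<infinity>"
        using False by (simp add: emeasure_space_1)
      show "AE x in M. ?I \<le> f x"
        using less by (intro AE_I2) (simp add: less_imp_le)
      show "\<not> (AE x in M. f x \<le> ?I)"
      proof
        assume "AE x in M. f x \<le> ?I"
        from this AE_space have "AE x in M. False"
          by eventually_elim (meson less leD)
        then show False by simp
      qed
    qed simp_all
    then show False by (simp add: emeasure_space_1)
  qed
qed

lemma borel_measurable_linear:
  fixes f :: "'a::euclidean_space \<Rightarrow> 'b::euclidean_space"
  assumes "linear f"
  shows "f \<in> borel_measurable borel"
  using assms
  by (intro borel_measurable_continuous_onI linear_continuous_on) (simp add: linear_conv_bounded_linear)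

lemma measurable_linear_rule:
  assumes "is_linear_rule n U l" "i < n"
    and "a \<in> N \<rightarrow>\<^sub>M borel" "b \<in> N \<rightarrow>\<^sub>M PiM {..<n} (\<lambda>_. borel)" "c \<in> N \<rightarrow>\<^sub>M U"
  shows "(\<lambda>z. l i (a z) (b z) (c z)) \<in> borel_measurable N"
proof -
  have "(\<lambda>(x, Xs, u). l i x Xs u) \<in> borel \<Otimes>\<^sub>M (PiM {..<n} (\<lambda>_. borel) \<Otimes>\<^sub>M U) \<rightarrow>\<^sub>M borel"
    using assms(1,2) unfolding is_linear_rule_def by blast
  from measurable_compose[OF measurable_Pair[OF assms(3) measurable_Pair[OF assms(4,5)]] this]
  show ?thesis by simp
qed

lemma restrict_fst_fun_upd_sum_insert:
  assumes "finite I" "j \<notin> I"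
  shows "A (\<lambda>i\<in>insert j I. fst ((S(j := p)) i))
        + (\<Sum>i\<in>insert j I. c i (\<lambda>i\<in>insert j I. fst ((S(j := p)) i)) * snd ((S(j := p)) i))
      = A ((\<lambda>i\<in>I. fst (S i))(j := fst p)) + c j ((\<lambda>i\<in>I. fst (S i))(j := fst p)) * snd p
        + (\<Sum>i\<in>I. c i ((\<lambda>i\<in>I. fst (S i))(j := fst p)) * snd (S i))"
proof -
  have "(\<lambda>i\<in>insert j I. fst ((S(j := p)) i)) = (\<lambda>i\<in>I. fst (S i))(j := fst p)"
    using assms by (auto simp: fun_eq_iff)
  moreover have "(\<Sum>i\<in>I. c i ((\<lambda>i\<in>I. fst (S i))(j := fst p)) * snd ((S(j := p)) i))
      = (\<Sum>i\<in>I. c i ((\<lambda>i\<in>I. fst (S i))(j := fst p)) * snd (S i))"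
    using assms by (intro sum.cong) auto
  ultimately show ?thesis
    using assms by (simp add: algebra_simps)
qed

locale regression_model =
  fixes PX :: "(real^'d::finite) measure" and K :: "real^'d \<Rightarrow> real measure" and sig2 :: real
  assumes PX_prob: "prob_space PX"
    and PX_sets: "sets PX = sets borel"
    and K_kernel: "K \<in> borel \<rightarrow>\<^sub>M prob_algebra borel"
    and noise: "AE x in PX. integrable (K x) (\<lambda>e. e) \<and> (\<integral> e. e \<partial>K x) = 0
                   \<and> integrable (K x) (\<lambda>e. e^2) \<and> (\<integral> e. e^2 \<partial>K x) = sig2"
begin

interpretation PX: prob_space PX by (rule PX_prob)

lemma K_subprob: "K \<in> PX \<rightarrow>\<^sub>M subprob_algebra borel"
  using measurable_prob_algebraD[OF K_kernel] PX_sets by (simp cong: measurable_cong_sets)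

lemma prob_space_K: "prob_space (K x)" and sets_K: "sets (K x) = sets borel"
  using measurable_space[OF K_kernel, of x] by (auto simp: space_prob_algebra)

lemma measurable_noise_pair_kernel:
  "(\<lambda>x. distr (K x) (borel \<Otimes>\<^sub>M borel) (\<lambda>e. (x, e))) \<in> PX \<rightarrow>\<^sub>M subprob_algebra (borel \<Otimes>\<^sub>M borel)"
  by (rule measurable_distr2[OF _ K_subprob]) (simp add: PX_sets cong: measurable_cong_sets)

lemma sets_noise_joint: "sets (noise_joint PX K) = sets (borel \<Otimes>\<^sub>M borel)"
  unfolding noise_joint_def using PX.not_empty by (subst sets_bind) auto

lemma prob_space_noise_joint: "prob_space (noise_joint PX K)"
  unfolding noise_joint_def
proof (rule PX.prob_space_bind[OF _ measurable_noise_pair_kernel])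
  show "AE x in PX. prob_space (distr (K x) (borel \<Otimes>\<^sub>M borel) (\<lambda>e. (x, e)))"
    by (intro AE_I2 prob_space.prob_space_distr prob_space_K)
      (simp add: sets_K cong: measurable_cong_sets)
qed

lemma sets_data_law: "sets (data_law PX K \<theta>) = sets (borel \<Otimes>\<^sub>M borel)"
  unfolding data_law_def by simp

lemma prob_space_data_law: "prob_space (data_law PX K \<theta>)"
  unfolding data_law_def
  by (intro prob_space.prob_space_distr prob_space_noise_joint)
    (simp add: sets_noise_joint cong: measurable_cong_sets)

lemma sets_PiM_PX: "sets (PiM I (\<lambda>_. PX)) = sets (PiM I (\<lambda>_. borel))"
  by (intro sets_PiM_cong) (auto simp: PX_sets)

lemma sets_PiM_data_law:
  "sets (PiM I (\<lambda>_. data_law PX K \<theta>)) = sets (PiM I (\<lambda>_. borel \<Otimes>\<^sub>M borel))"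
  by (intro sets_PiM_cong) (auto simp: sets_data_law)

declare PX_sets[measurable_cong] sets_data_law[measurable_cong]
  sets_PiM_PX[measurable_cong] sets_PiM_data_law[measurable_cong]

lemma nn_integral_data_law:
  assumes [measurable]: "h \<in> borel_measurable (borel \<Otimes>\<^sub>M borel)"
  shows "(\<integral>\<^sup>+p. h p \<partial>data_law PX K \<theta>) = (\<integral>\<^sup>+x. \<integral>\<^sup>+e. h (x, x \<bullet> \<theta> + e) \<partial>K x \<partial>PX)"
proof -
  have "(\<integral>\<^sup>+p. h p \<partial>data_law PX K \<theta>)
      = (\<integral>\<^sup>+p. h ((\<lambda>(x, e). (x, x \<bullet> \<theta> + e)) p) \<partial>noise_joint PX K)"
    unfolding data_law_def
    by (rule nn_integral_distr) (simp_all add: sets_noise_joint cong: measurable_cong_sets)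
  also have "\<dots> = (\<integral>\<^sup>+x. \<integral>\<^sup>+p. h ((\<lambda>(x, e). (x, x \<bullet> \<theta> + e)) p)
                     \<partial>distr (K x) (borel \<Otimes>\<^sub>M borel) (\<lambda>e. (x, e)) \<partial>PX)"
    unfolding noise_joint_def by (rule nn_integral_bind[OF _ measurable_noise_pair_kernel]) simp
  also have "\<dots> = (\<integral>\<^sup>+x. \<integral>\<^sup>+e. h (x, x \<bullet> \<theta> + e) \<partial>K x \<partial>PX)"
    by (intro nn_integral_cong, subst nn_integral_distr)
      (simp_all add: sets_K cong: measurable_cong_sets)
  finally show ?thesis .
qed

lemma noise_variance_nonneg: "0 \<le> sig2"
proof -
  have "AE x in PX. 0 \<le> sig2"
    using noise
  proof eventually_elim
    case (elim x)
    have "0 \<le> (\<integral> e. e^2 \<partial>K x)" by simp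
    with elim show ?case by simp
  qed
  then show ?thesis by simp
qed

lemma nn_integral_noise_square:
  assumes x: "integrable (K x) (\<lambda>e. e) \<and> (\<integral> e. e \<partial>K x) = 0
                \<and> integrable (K x) (\<lambda>e. e^2) \<and> (\<integral> e. e^2 \<partial>K x) = sig2"
    and "0 \<le> b"
  shows "(\<integral>\<^sup>+e. ennreal ((a + c * e)^2 + b) \<partial>K x) = ennreal (a^2 + c^2 * sig2 + b)"
proof -
  interpret Kx: prob_space "K x" by (rule prob_space_K)
  have expand: "(\<lambda>e. (a + c * e)^2 + b) = (\<lambda>e. (a^2 + b) + (2*a*c) * e + c^2 * e^2)"
    by (auto simp: power2_eq_square algebra_simps)
  have "integrable (K x) (\<lambda>e. (a + c * e)^2 + b)"
    unfolding expand using x by auto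
  then have "(\<integral>\<^sup>+e. ennreal ((a + c * e)^2 + b) \<partial>K x) = ennreal (\<integral>e. (a + c * e)^2 + b \<partial>K x)"
    by (rule nn_integral_eq_integral) (simp add: \<open>0 \<le> b\<close> add_nonneg_nonneg)
  also have "(\<integral>e. (a + c * e)^2 + b \<partial>K x) = a^2 + c^2 * sig2 + b"
    unfolding expand using x by (simp add: Kx.prob_space)
  finally show ?thesis .
qed

lemma nn_integral_data_law_square:
  assumes [measurable]: "a \<in> borel_measurable borel" "c \<in> borel_measurable borel"
      "b \<in> borel_measurable borel"
    and b: "\<And>x. 0 \<le> b x"
  shows "(\<integral>\<^sup>+p. ennreal ((a (fst p) + c (fst p) * snd p)^2 + b (fst p)) \<partial>data_law PX K \<theta>)
       = (\<integral>\<^sup>+x. ennreal ((a x + c x * (x \<bullet> \<theta>))^2 + (c x)^2 * sig2 + b x) \<partial>PX)"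
proof -
  have "(\<integral>\<^sup>+p. ennreal ((a (fst p) + c (fst p) * snd p)^2 + b (fst p)) \<partial>data_law PX K \<theta>)
     = (\<integral>\<^sup>+x. \<integral>\<^sup>+e. ennreal (((a x + c x * (x \<bullet> \<theta>)) + c x * e)^2 + b x) \<partial>K x \<partial>PX)"
    by (subst nn_integral_data_law) (auto simp: algebra_simps)
  also have "\<dots> = (\<integral>\<^sup>+x. ennreal ((a x + c x * (x \<bullet> \<theta>))^2 + (c x)^2 * sig2 + b x) \<partial>PX)"
    using noise by (intro nn_integral_cong_AE, eventually_elim) (rule nn_integral_noise_square[OF _ b])
  finally show ?thesis .
qed

lemma nn_integral_data_law_update_square:
  assumes "finite I" "j \<notin> I" and Xs: "Xs \<in> space (PiM I (\<lambda>_. borel))"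
    and [measurable]: "A \<in> borel_measurable (PiM (insert j I) (\<lambda>_. borel))"
      "\<And>i. i \<in> insert j I \<Longrightarrow> c i \<in> borel_measurable (PiM (insert j I) (\<lambda>_. borel))"
  shows "(\<integral>\<^sup>+p. ennreal ((A (Xs(j := fst p)) + c j (Xs(j := fst p)) * snd p
              + (\<Sum>i\<in>I. c i (Xs(j := fst p)) * (Xs i \<bullet> \<theta>)))^2
            + sig2 * (\<Sum>i\<in>I. (c i (Xs(j := fst p)))^2)) \<partial>data_law PX K \<theta>)
       = (\<integral>\<^sup>+x. ennreal ((A (Xs(j := x)) + (\<Sum>i\<in>insert j I. c i (Xs(j := x)) * ((Xs(j := x)) i \<bullet> \<theta>)))^2
            + sig2 * (\<Sum>i\<in>insert j I. (c i (Xs(j := x)))^2)) \<partial>PX)"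
proof -
  have [measurable]: "(\<lambda>x. Xs(j := x)) \<in> borel \<rightarrow>\<^sub>M PiM (insert j I) (\<lambda>_. borel)"
    using measurable_component_update[OF Xs \<open>j \<notin> I\<close>] .
  define a where "a x = A (Xs(j := x)) + (\<Sum>i\<in>I. c i (Xs(j := x)) * (Xs i \<bullet> \<theta>))" for x
  define b where "b x = sig2 * (\<Sum>i\<in>I. (c i (Xs(j := x)))^2)" for x
  have [measurable]: "a \<in> borel_measurable borel" "b \<in> borel_measurable borel"
    unfolding a_def b_def by measurable
  have old_points: "(\<Sum>i\<in>I. c i (Xs(j := x)) * ((Xs(j := x)) i \<bullet> \<theta>))
      = (\<Sum>i\<in>I. c i (Xs(j := x)) * (Xs i \<bullet> \<theta>))" for x
    using \<open>j \<notin> I\<close> by (intro sum.cong) auto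
  have "(\<integral>\<^sup>+p. ennreal ((A (Xs(j := fst p)) + c j (Xs(j := fst p)) * snd p
              + (\<Sum>i\<in>I. c i (Xs(j := fst p)) * (Xs i \<bullet> \<theta>)))^2
            + sig2 * (\<Sum>i\<in>I. (c i (Xs(j := fst p)))^2)) \<partial>data_law PX K \<theta>)
      = (\<integral>\<^sup>+p. ennreal ((a (fst p) + c j (Xs(j := fst p)) * snd p)^2 + b (fst p)) \<partial>data_law PX K \<theta>)"
    unfolding a_def b_def by (simp add: algebra_simps)
  also have "\<dots> = (\<integral>\<^sup>+x. ennreal ((a x + c j (Xs(j := x)) * (x \<bullet> \<theta>))^2
                        + (c j (Xs(j := x)))^2 * sig2 + b x) \<partial>PX)"
    by (rule nn_integral_data_law_square)
      (auto simp: b_def noise_variance_nonneg intro!: mult_nonneg_nonneg sum_nonneg)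
  also have "\<dots> = (\<integral>\<^sup>+x. ennreal ((A (Xs(j := x)) + (\<Sum>i\<in>insert j I. c i (Xs(j := x)) * ((Xs(j := x)) i \<bullet> \<theta>)))^2
            + sig2 * (\<Sum>i\<in>insert j I. (c i (Xs(j := x)))^2)) \<partial>PX)"
    using assms(1,2)
    by (simp add: old_points a_def b_def algebra_simps fun_upd_same del: fun_upd_apply)
  finally show ?thesis .
qed

text \<open>The training labels are integrated out one sample at a time. Working with nonnegative
  integrals, no integrability of the rule is needed.\<close>

lemma nn_integral_sample_square:
  assumes "finite I"
    and "A \<in> borel_measurable (PiM I (\<lambda>_. borel))"
    and "\<And>i. i \<in> I \<Longrightarrow> c i \<in> borel_measurable (PiM I (\<lambda>_. borel))"
  shows "(\<integral>\<^sup>+S. ennreal ((A (\<lambda>i\<in>I. fst (S i)) + (\<Sum>i\<in>I. c i (\<lambda>i\<in>I. fst (S i)) * snd (S i)))^2)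
            \<partial>PiM I (\<lambda>_. data_law PX K \<theta>))
       = (\<integral>\<^sup>+Xs. ennreal ((A Xs + (\<Sum>i\<in>I. c i Xs * (Xs i \<bullet> \<theta>)))^2 + sig2 * (\<Sum>i\<in>I. (c i Xs)^2))
            \<partial>PiM I (\<lambda>_. PX))"
  using assms
proof (induction I arbitrary: A c rule: finite_induct)
  case empty
  have "(\<lambda>i\<in>{}. f i) = (\<lambda>_. undefined)" for f :: "'i \<Rightarrow> 'z" by auto
  then show ?case by (simp add: PiM_empty nn_integral_count_space_finite)
next
  case (insert j I)
  note [measurable] = insert.prems
  let ?DL = "data_law PX K \<theta>"
  interpret D: product_prob_space "\<lambda>_. ?DL" by (intro product_prob_spaceI prob_space_data_law)
  interpret P: product_prob_space "\<lambda>_. PX" by (intro product_prob_spaceI PX_prob)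
  have [measurable]: "(\<lambda>z. (f z)(j := g z)) \<in> N \<rightarrow>\<^sub>M PiM (insert j I) (\<lambda>_. borel)"
    if [measurable]: "f \<in> N \<rightarrow>\<^sub>M PiM I (\<lambda>_. borel)" "g \<in> N \<rightarrow>\<^sub>M borel" for f g and N :: "'z measure"
    using that by (rule measurable_fun_upd[rotated]) auto
  have sigma_finite: "pair_sigma_finite (PiM I (\<lambda>_. ?DL)) ?DL" "pair_sigma_finite (PiM I (\<lambda>_. PX)) ?DL"
    by (intro pair_sigma_finite.intro prob_space_imp_sigma_finite prob_space_PiM prob_space_data_law PX_prob)+
  define A' where "A' p Xs = A (Xs(j := fst p)) + c j (Xs(j := fst p)) * snd p" for p :: "(real^'d) \<times> real" and Xs
  define c' where "c' p i Xs = c i (Xs(j := fst p))" for p :: "(real^'d) \<times> real" and i Xs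
  have "(\<integral>\<^sup>+S. ennreal ((A (\<lambda>i\<in>insert j I. fst (S i))
              + (\<Sum>i\<in>insert j I. c i (\<lambda>i\<in>insert j I. fst (S i)) * snd (S i)))^2) \<partial>PiM (insert j I) (\<lambda>_. ?DL))
      = (\<integral>\<^sup>+S. \<integral>\<^sup>+p. ennreal ((A' p (\<lambda>i\<in>I. fst (S i)) + (\<Sum>i\<in>I. c' p i (\<lambda>i\<in>I. fst (S i)) * snd (S i)))^2)
            \<partial>?DL \<partial>PiM I (\<lambda>_. ?DL))"
    unfolding A'_def c'_def
    by (subst D.product_nn_integral_insert[OF insert.hyps])
      (measurable, simp only: restrict_fst_fun_upd_sum_insert[OF insert.hyps])
  also have "\<dots> = (\<integral>\<^sup>+p. \<integral>\<^sup>+S. ennreal ((A' p (\<lambda>i\<in>I. fst (S i)) + (\<Sum>i\<in>I. c' p i (\<lambda>i\<in>I. fst (S i)) * snd (S i)))^2)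
            \<partial>PiM I (\<lambda>_. ?DL) \<partial>?DL)"
    by (rule pair_sigma_finite.Fubini'[OF sigma_finite(1), symmetric]) (unfold A'_def c'_def, measurable)
  also have "\<dots> = (\<integral>\<^sup>+p. \<integral>\<^sup>+Xs. ennreal ((A' p Xs + (\<Sum>i\<in>I. c' p i Xs * (Xs i \<bullet> \<theta>)))^2 + sig2 * (\<Sum>i\<in>I. (c' p i Xs)^2))
            \<partial>PiM I (\<lambda>_. PX) \<partial>?DL)"
    by (intro nn_integral_cong insert.IH) (unfold A'_def c'_def, measurable)
  also have "\<dots> = (\<integral>\<^sup>+Xs. \<integral>\<^sup>+p. ennreal ((A' p Xs + (\<Sum>i\<in>I. c' p i Xs * (Xs i \<bullet> \<theta>)))^2 + sig2 * (\<Sum>i\<in>I. (c' p i Xs)^2))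
            \<partial>?DL \<partial>PiM I (\<lambda>_. PX))"
    by (rule pair_sigma_finite.Fubini'[OF sigma_finite(2)]) (unfold A'_def c'_def, measurable)
  also have "\<dots> = (\<integral>\<^sup>+Xs. \<integral>\<^sup>+x. ennreal ((A (Xs(j:=x)) + (\<Sum>i\<in>insert j I. c i (Xs(j:=x)) * ((Xs(j:=x)) i \<bullet> \<theta>)))^2
            + sig2 * (\<Sum>i\<in>insert j I. (c i (Xs(j:=x)))^2)) \<partial>PX \<partial>PiM I (\<lambda>_. PX))"
    unfolding A'_def c'_def using insert.hyps
    by (intro nn_integral_cong nn_integral_data_law_update_square)
      (simp_all add: space_PiM PX_sets[THEN sets_eq_imp_space_eq])
  also have "\<dots> = (\<integral>\<^sup>+Xs. ennreal ((A Xs + (\<Sum>i\<in>insert j I. c i Xs * (Xs i \<bullet> \<theta>)))^2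
            + sig2 * (\<Sum>i\<in>insert j I. (c i Xs)^2)) \<partial>PiM (insert j I) (\<lambda>_. PX))"
    by (rule P.product_nn_integral_insert[OF insert.hyps, symmetric]) measurable
  finally show ?case .
qed

text \<open>Squared loss at the test covariate \<open>x\<close>, averaged over the training and test noise:
  squared bias plus the variance \<open>\<sigma>\<^sup>2\<close> of the test label and of the weighted training labels.\<close>

definition cond_risk :: "nat \<Rightarrow> (nat \<Rightarrow> real^'d \<Rightarrow> (nat \<Rightarrow> real^'d) \<Rightarrow> 'u \<Rightarrow> real)
    \<Rightarrow> real^'d \<Rightarrow> real^'d \<Rightarrow> (nat \<Rightarrow> real^'d) \<Rightarrow> 'u \<Rightarrow> ennreal" where
  "cond_risk n l \<theta> x Xs u = ennreal ((x \<bullet> \<theta> - (\<Sum>i<n. l i x Xs u * (Xs i \<bullet> \<theta>)))^2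
                                    + sig2 * (1 + (\<Sum>i<n. (l i x Xs u)^2)))"

lemma exp_risk_eq_iterated:
  assumes rule: "is_linear_rule n U l"
  shows "exp_risk n PX K U l \<theta> = (\<integral>\<^sup>+u. \<integral>\<^sup>+p. \<integral>\<^sup>+S. ennreal ((snd p - lin_pred n l S u (fst p))^2)
            \<partial>PiM {..<n} (\<lambda>_. data_law PX K \<theta>) \<partial>data_law PX K \<theta> \<partial>U)"
proof -
  let ?DL = "data_law PX K \<theta>"
  let ?Pi = "PiM {..<n} (\<lambda>_. ?DL)"
  interpret U: prob_space U using rule unfolding is_linear_rule_def by blast
  interpret DL: prob_space ?DL by (rule prob_space_data_law)
  note [measurable] = measurable_linear_rule[OF rule]
  define h where "h u S p = ennreal ((snd p - lin_pred n l S u (fst p))^2)"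
    for u S and p :: "(real^'d) \<times> real"
  have [measurable]: "(\<lambda>z. h (uu z) (SS z) (pp z)) \<in> borel_measurable N"
    if [measurable]: "uu \<in> N \<rightarrow>\<^sub>M U" "SS \<in> N \<rightarrow>\<^sub>M ?Pi" "pp \<in> N \<rightarrow>\<^sub>M ?DL"
    for uu SS pp and N :: "'z measure"
  proof -
    have [measurable]: "pp \<in> N \<rightarrow>\<^sub>M borel \<Otimes>\<^sub>M borel"
      using that(3) measurable_cong_sets[OF refl sets_data_law] by blast
    have [measurable]: "SS \<in> N \<rightarrow>\<^sub>M PiM {..<n} (\<lambda>_. borel \<Otimes>\<^sub>M borel)"
      using that(2) measurable_cong_sets[OF refl sets_PiM_data_law] by blast
    show ?thesis unfolding h_def lin_pred_def by measurable
  qed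
  have sigma_finite: "pair_sigma_finite U ?Pi" "pair_sigma_finite ?DL ?Pi"
    by (intro pair_sigma_finite.intro prob_space_imp_sigma_finite prob_space_PiM
        prob_space_data_law U.prob_space_axioms)+
  have "exp_risk n PX K U l \<theta> = (\<integral>\<^sup>+(S, u). (\<integral>\<^sup>+p. h u S p \<partial>?DL) \<partial>(?Pi \<Otimes>\<^sub>M U))"
    unfolding exp_risk_def h_def by (intro nn_integral_cong) (auto simp: split_beta')
  also have "\<dots> = (\<integral>\<^sup>+S. \<integral>\<^sup>+u. \<integral>\<^sup>+p. h u S p \<partial>?DL \<partial>U \<partial>?Pi)"
    by (subst U.nn_integral_fst[symmetric]) (simp_all add: split_beta')
  also have "\<dots> = (\<integral>\<^sup>+u. \<integral>\<^sup>+S. \<integral>\<^sup>+p. h u S p \<partial>?DL \<partial>?Pi \<partial>U)"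
    by (rule pair_sigma_finite.Fubini'[OF sigma_finite(1)]) (simp add: split_beta')
  also have "\<dots> = (\<integral>\<^sup>+u. \<integral>\<^sup>+p. \<integral>\<^sup>+S. h u S p \<partial>?Pi \<partial>?DL \<partial>U)"
    by (intro nn_integral_cong pair_sigma_finite.Fubini'[OF sigma_finite(2)]) (simp add: split_beta')
  finally show ?thesis unfolding h_def .
qed

lemma nn_integral_sample_lin_pred:
  assumes rule: "is_linear_rule n U l" and u: "u \<in> space U"
  shows "(\<integral>\<^sup>+S. ennreal ((y - lin_pred n l S u x)^2) \<partial>PiM {..<n} (\<lambda>_. data_law PX K \<theta>))
       = (\<integral>\<^sup>+Xs. ennreal ((y - (\<Sum>i<n. l i x Xs u * (Xs i \<bullet> \<theta>)))^2 + sig2 * (\<Sum>i<n. (l i x Xs u)^2))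
            \<partial>PiM {..<n} (\<lambda>_. PX))"
proof -
  note [measurable] = measurable_linear_rule[OF rule]
  have [measurable]: "(\<lambda>Xs. l i x Xs u) \<in> borel_measurable (PiM {..<n} (\<lambda>_. borel))" if "i < n" for i
    using u that by measurable
  show ?thesis
    unfolding lin_pred_def
    using nn_integral_sample_square[of "{..<n}" "\<lambda>_. y" "\<lambda>i Xs. - l i x Xs u"]
    by (simp add: sum_negf)
qed

lemma nn_integral_test_pair_eq_cond_risk:
  assumes rule: "is_linear_rule n U l" and "u \<in> space U" "Xs \<in> space (PiM {..<n} (\<lambda>_. PX))"
  shows "(\<integral>\<^sup>+p. ennreal ((snd p - (\<Sum>i<n. l i (fst p) Xs u * (Xs i \<bullet> \<theta>)))^2
              + sig2 * (\<Sum>i<n. (l i (fst p) Xs u)^2)) \<partial>data_law PX K \<theta>)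
       = (\<integral>\<^sup>+x. cond_risk n l \<theta> x Xs u \<partial>PX)"
proof -
  note [measurable] = measurable_linear_rule[OF rule]
  have [measurable]: "(\<lambda>x. l i x Xs u) \<in> borel_measurable borel" if "i < n" for i
    using assms that by (simp add: space_PiM PX_sets[THEN sets_eq_imp_space_eq])
  define a where "a x = - (\<Sum>i<n. l i x Xs u * (Xs i \<bullet> \<theta>))" for x
  define b where "b x = sig2 * (\<Sum>i<n. (l i x Xs u)^2)" for x
  have [measurable]: "a \<in> borel_measurable borel" "b \<in> borel_measurable borel"
    unfolding a_def b_def by measurable
  have "(\<integral>\<^sup>+p. ennreal ((snd p - (\<Sum>i<n. l i (fst p) Xs u * (Xs i \<bullet> \<theta>)))^2
              + sig2 * (\<Sum>i<n. (l i (fst p) Xs u)^2)) \<partial>data_law PX K \<theta>)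
      = (\<integral>\<^sup>+p. ennreal ((a (fst p) + 1 * snd p)^2 + b (fst p)) \<partial>data_law PX K \<theta>)"
    unfolding a_def b_def by (simp add: algebra_simps)
  also have "\<dots> = (\<integral>\<^sup>+x. ennreal ((a x + 1 * (x \<bullet> \<theta>))^2 + 1^2 * sig2 + b x) \<partial>PX)"
    by (rule nn_integral_data_law_square[where c="\<lambda>_. 1"])
      (auto simp: b_def noise_variance_nonneg intro!: mult_nonneg_nonneg sum_nonneg)
  also have "\<dots> = (\<integral>\<^sup>+x. cond_risk n l \<theta> x Xs u \<partial>PX)"
    unfolding cond_risk_def a_def b_def by (intro nn_integral_cong) (simp add: algebra_simps)
  finally show ?thesis .
qed

lemma exp_risk_eq_cond_risk:
  assumes rule: "is_linear_rule n U l"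
  shows "exp_risk n PX K U l \<theta>
       = (\<integral>\<^sup>+u. \<integral>\<^sup>+Xs. \<integral>\<^sup>+x. cond_risk n l \<theta> x Xs u \<partial>PX \<partial>PiM {..<n} (\<lambda>_. PX) \<partial>U)"
proof -
  let ?DL = "data_law PX K \<theta>"
  let ?PP = "PiM {..<n} (\<lambda>_. PX)"
  note [measurable] = measurable_linear_rule[OF rule]
  define G where "G u p Xs = ennreal ((snd p - (\<Sum>i<n. l i (fst p) Xs u * (Xs i \<bullet> \<theta>)))^2
                                    + sig2 * (\<Sum>i<n. (l i (fst p) Xs u)^2))"
    for u and p :: "(real^'d) \<times> real" and Xs
  have sigma_finite: "pair_sigma_finite ?PP ?DL"
    by (intro pair_sigma_finite.intro prob_space_imp_sigma_finite prob_space_PiM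
        prob_space_data_law PX_prob)
  have "exp_risk n PX K U l \<theta> = (\<integral>\<^sup>+u. \<integral>\<^sup>+p. \<integral>\<^sup>+Xs. G u p Xs \<partial>?PP \<partial>?DL \<partial>U)"
    unfolding exp_risk_eq_iterated[OF rule] G_def
    by (intro nn_integral_cong nn_integral_sample_lin_pred[OF rule])
  also have "\<dots> = (\<integral>\<^sup>+u. \<integral>\<^sup>+Xs. \<integral>\<^sup>+p. G u p Xs \<partial>?DL \<partial>?PP \<partial>U)"
    by (intro nn_integral_cong pair_sigma_finite.Fubini'[OF sigma_finite]) (unfold G_def, measurable)
  also have "\<dots> = (\<integral>\<^sup>+u. \<integral>\<^sup>+Xs. \<integral>\<^sup>+x. cond_risk n l \<theta> x Xs u \<partial>PX \<partial>?PP \<partial>U)"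
    unfolding G_def by (intro nn_integral_cong nn_integral_test_pair_eq_cond_risk[OF rule])
  finally show ?thesis .
qed

end

locale linear_rule = regression_model PX K sig2
  for PX :: "(real^'d::finite) measure" and K sig2 +
  fixes n :: nat and U :: "'u measure"
    and l :: "nat \<Rightarrow> real^'d \<Rightarrow> (nat \<Rightarrow> real^'d) \<Rightarrow> 'u \<Rightarrow> real"
  assumes rule: "is_linear_rule n U l"
begin

abbreviation "PP \<equiv> PiM {..<n} (\<lambda>_. PX)"

sublocale U: prob_space U
  using rule unfolding is_linear_rule_def by blast

interpretation PX: prob_space PX by (rule PX_prob)
interpretation PP: prob_space PP by (intro prob_space_PiM PX_prob)

lemmas measurable_rule[measurable] = measurable_linear_rule[OF rule]

lemma measurable_cond_risk[measurable]:
  assumes [measurable]: "tf \<in> N \<rightarrow>\<^sub>M borel" "xf \<in> N \<rightarrow>\<^sub>M borel"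
    "Xf \<in> N \<rightarrow>\<^sub>M PiM {..<n} (\<lambda>_. borel)" "uf \<in> N \<rightarrow>\<^sub>M U"
  shows "(\<lambda>z. cond_risk n l (tf z) (xf z) (Xf z) (uf z)) \<in> borel_measurable N"
  unfolding cond_risk_def by measurable

interpretation PPU: prob_space "PP \<Otimes>\<^sub>M U"
  by (intro prob_space_pair PP.prob_space_axioms U.prob_space_axioms)

lemma exp_risk_eq_nn_integral_pair:
  "exp_risk n PX K U l \<theta>
     = (\<integral>\<^sup>+p. cond_risk n l \<theta> (fst p) (fst (snd p)) (snd (snd p)) \<partial>(PX \<Otimes>\<^sub>M (PP \<Otimes>\<^sub>M U)))"
proof -
  have sigma_finite: "pair_sigma_finite PP U" "pair_sigma_finite PX U" "pair_sigma_finite PX PP"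
    by (intro pair_sigma_finite.intro prob_space_imp_sigma_finite PX.prob_space_axioms
        PP.prob_space_axioms U.prob_space_axioms)+
  have "exp_risk n PX K U l \<theta> = (\<integral>\<^sup>+u. \<integral>\<^sup>+Xs. \<integral>\<^sup>+x. cond_risk n l \<theta> x Xs u \<partial>PX \<partial>PP \<partial>U)"
    by (rule exp_risk_eq_cond_risk[OF rule])
  also have "\<dots> = (\<integral>\<^sup>+Xs. \<integral>\<^sup>+u. \<integral>\<^sup>+x. cond_risk n l \<theta> x Xs u \<partial>PX \<partial>U \<partial>PP)"
    by (rule pair_sigma_finite.Fubini'[OF sigma_finite(1)]) measurable
  also have "\<dots> = (\<integral>\<^sup>+Xs. \<integral>\<^sup>+x. \<integral>\<^sup>+u. cond_risk n l \<theta> x Xs u \<partial>U \<partial>PX \<partial>PP)"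
  proof (intro nn_integral_cong)
    fix Xs assume "Xs \<in> space PP"
    then have [measurable]: "Xs \<in> space (PiM {..<n} (\<lambda>_. borel))"
      by (simp add: space_PiM PX_sets[THEN sets_eq_imp_space_eq])
    show "(\<integral>\<^sup>+u. \<integral>\<^sup>+x. cond_risk n l \<theta> x Xs u \<partial>PX \<partial>U) = (\<integral>\<^sup>+x. \<integral>\<^sup>+u. cond_risk n l \<theta> x Xs u \<partial>U \<partial>PX)"
      by (rule pair_sigma_finite.Fubini'[OF sigma_finite(2)]) measurable
  qed
  also have "\<dots> = (\<integral>\<^sup>+x. \<integral>\<^sup>+Xs. \<integral>\<^sup>+u. cond_risk n l \<theta> x Xs u \<partial>U \<partial>PP \<partial>PX)"
    by (rule pair_sigma_finite.Fubini'[OF sigma_finite(3)]) measurable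
  also have "\<dots> = (\<integral>\<^sup>+x. \<integral>\<^sup>+q. cond_risk n l \<theta> x (fst q) (snd q) \<partial>(PP \<Otimes>\<^sub>M U) \<partial>PX)"
    by (intro nn_integral_cong U.nn_integral_fst[of "\<lambda>q. cond_risk n l \<theta> _ (fst q) (snd q)", simplified])
      measurable
  also have "\<dots> = (\<integral>\<^sup>+p. cond_risk n l \<theta> (fst p) (fst (snd p)) (snd (snd p)) \<partial>(PX \<Otimes>\<^sub>M (PP \<Otimes>\<^sub>M U)))"
    by (rule PPU.nn_integral_fst[of "\<lambda>p. cond_risk n l \<theta> (fst p) (fst (snd p)) (snd (snd p))", simplified])
      measurable
  finally show ?thesis .
qed

lemma measurable_compose_PP:
  assumes "T \<in> PX \<rightarrow>\<^sub>M PX"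
  shows "compose {..<n} T \<in> PP \<rightarrow>\<^sub>M PP"
  unfolding compose_def
  by (intro measurable_restrict measurable_compose[OF _ assms] measurable_component_singleton) simp

lemma distr_covariate_transform:
  assumes T: "T \<in> PX \<rightarrow>\<^sub>M PX" "distr PX PX T = PX"
  shows "distr (PX \<Otimes>\<^sub>M (PP \<Otimes>\<^sub>M U)) (PX \<Otimes>\<^sub>M (PP \<Otimes>\<^sub>M U))
           (\<lambda>p. (T (fst p), compose {..<n} T (fst (snd p)), snd (snd p)))
       = PX \<Otimes>\<^sub>M (PP \<Otimes>\<^sub>M U)"
proof -
  note compose_T = measurable_compose_PP[OF T(1)]
  have "distr PP PP (compose {..<n} T) = PiM {..<n} (\<lambda>_. distr PX PX T)"
    by (rule distr_PiM_finite_prob_space') (auto intro: PX_prob T(1))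
  then have "distr PP PP (compose {..<n} T) = PP"
    by (simp add: T(2))
  then have PPU: "distr (PP \<Otimes>\<^sub>M U) (PP \<Otimes>\<^sub>M U) (\<lambda>q. (compose {..<n} T (fst q), snd q)) = PP \<Otimes>\<^sub>M U"
    using pair_measure_distr[OF compose_T measurable_ident_sets[OF refl, of U]]
    by (simp add: U.sigma_finite_measure_axioms distr_id split_beta')
  have "(\<lambda>q. (compose {..<n} T (fst q), snd q)) \<in> PP \<Otimes>\<^sub>M U \<rightarrow>\<^sub>M PP \<Otimes>\<^sub>M U"
    using compose_T by measurable
  from pair_measure_distr[OF T(1) this] show ?thesis
    by (simp add: PPU T(2) PPU.sigma_finite_measure_axioms split_beta')
qed

lemma linear_rule_fix_randomness:
  assumes u: "u \<in> space U"
  shows "is_linear_rule n (return (count_space UNIV) w) (\<lambda>i x Xs _. l i x Xs u)" (is ?rule)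
    and "exp_risk n PX K (return (count_space UNIV) w) (\<lambda>i x Xs _. l i x Xs u) \<theta>
       = (\<integral>\<^sup>+Xs. \<integral>\<^sup>+x. cond_risk n l \<theta> x Xs u \<partial>PX \<partial>PP)"
proof -
  interpret V: prob_space "return (count_space UNIV) w"
    by (rule prob_space_return) simp
  show ?rule
    unfolding is_linear_rule_def using u by (simp add: V.prob_space_axioms split_beta')
  then show "exp_risk n PX K (return (count_space UNIV) w) (\<lambda>i x Xs _. l i x Xs u) \<theta>
      = (\<integral>\<^sup>+Xs. \<integral>\<^sup>+x. cond_risk n l \<theta> x Xs u \<partial>PX \<partial>PP)"
    by (simp add: exp_risk_eq_cond_risk cond_risk_def V.emeasure_space_1)
qed

text \<open>The infimum in \<^const>\<open>bayes_lin_risk\<close> ranges over rules randomised by an arbitrary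
  fixed type \<open>'v\<close>; freezing the randomness of the given rule at a good value produces one.\<close>

lemma bayes_lin_risk_le_avg_excess_risk:
  assumes \<nu>: "prob_space \<nu>" and [measurable_cong]: "sets \<nu> = sets borel"
  shows "bayes_lin_risk n PX K sig2 \<nu> TYPE('v) \<le> avg_excess_risk n PX K sig2 \<nu> U l"
proof -
  interpret \<nu>: prob_space \<nu> by (rule \<nu>)
  define r where "r \<theta> u = (\<integral>\<^sup>+Xs. \<integral>\<^sup>+x. cond_risk n l \<theta> x Xs u \<partial>PX \<partial>PP)" for \<theta> u
  have r_measurable[measurable]: "(\<lambda>(u, \<theta>). r \<theta> u) \<in> borel_measurable (U \<Otimes>\<^sub>M \<nu>)"
    unfolding r_def by measurable
  define R where "R u = (\<integral>\<^sup>+\<theta>. r \<theta> u \<partial>\<nu>)" for u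
  have R_measurable: "R \<in> borel_measurable U"
    unfolding R_def by measurable
  obtain u0 where u0: "u0 \<in> space U" and u0_le: "R u0 \<le> (\<integral>\<^sup>+u. R u \<partial>U)"
    using U.exists_le_nn_integral[OF R_measurable] by blast
  have "(\<integral>\<^sup>+u. R u \<partial>U) = (\<integral>\<^sup>+\<theta>. exp_risk n PX K U l \<theta> \<partial>\<nu>)"
    unfolding R_def exp_risk_eq_cond_risk[OF rule] r_def[symmetric]
    by (rule pair_sigma_finite.Fubini'[symmetric])
      (intro pair_sigma_finite.intro U.sigma_finite_measure_axioms \<nu>.sigma_finite_measure_axioms,
       rule r_measurable)
  with u0_le have avg_le: "(\<integral>\<^sup>+\<theta>. r \<theta> u0 \<partial>\<nu>) \<le> (\<integral>\<^sup>+\<theta>. exp_risk n PX K U l \<theta> \<partial>\<nu>)"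
    unfolding R_def by simp
  define V :: "'v measure" where "V = return (count_space UNIV) undefined"
  have "bayes_lin_risk n PX K sig2 \<nu> TYPE('v) \<le> avg_excess_risk n PX K sig2 \<nu> V (\<lambda>i x Xs _. l i x Xs u0)"
    unfolding bayes_lin_risk_def
    by (rule INF_lower2[of "(V, \<lambda>i x Xs _. l i x Xs u0)"])
      (simp_all add: V_def linear_rule_fix_randomness[OF u0])
  also have "\<dots> \<le> avg_excess_risk n PX K sig2 \<nu> U l"
    using avg_le unfolding avg_excess_risk_def V_def linear_rule_fix_randomness(2)[OF u0] r_def
    by (intro ereal_minus_mono) (simp_all add: less_eq_ennreal.rep_eq[symmetric])
  finally show ?thesis .
qed

end

locale invariant_linear_rule = linear_rule PX K sig2 n U l
  for PX :: "(real^'d::finite) measure" and K sig2 n U l +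
  assumes invariant: "\<forall>Q :: real^'d^'d. orthogonal_matrix Q \<longrightarrow> (\<forall>i<n.
        AE p in PX \<Otimes>\<^sub>M (PiM {..<n} (\<lambda>_. PX) \<Otimes>\<^sub>M U).
          (case p of (x, Xs, u) \<Rightarrow> l i x Xs u = l i (Q *v x) (\<lambda>k\<in>{..<n}. Q *v Xs k) u))"
begin

lemma exp_risk_orthogonal_invariant:
  assumes T: "orthogonal_transformation T" and PX_T: "distr PX borel T = PX"
  shows "exp_risk n PX K U l (T \<theta>) = exp_risk n PX K U l \<theta>"
proof -
  let ?M = "PX \<Otimes>\<^sub>M (PP \<Otimes>\<^sub>M U)"
  let ?T = "\<lambda>p. (T (fst p), compose {..<n} T (fst (snd p)), snd (snd p))"
  let ?risk = "\<lambda>\<theta> p. cond_risk n l \<theta> (fst p) (fst (snd p)) (snd (snd p))"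
  have linear: "linear T" and inner_T: "T x \<bullet> T y = x \<bullet> y" for x y
    using T unfolding orthogonal_transformation_def by auto
  have T_measurable: "T \<in> PX \<rightarrow>\<^sub>M PX"
    using borel_measurable_linear[OF linear] by (simp add: PX_sets cong: measurable_cong_sets)
  have "distr PX PX T = distr PX borel T"
    by (rule distr_cong) (simp_all add: PX_sets)
  note distr_T = distr_covariate_transform[OF T_measurable this[unfolded PX_T]]
  note [measurable] = measurable_compose_PP[OF T_measurable] T_measurable
  have "AE p in ?M. \<forall>i\<in>{..<n}. case p of (x, Xs, u) \<Rightarrow>
      l i x Xs u = l i (matrix T *v x) (\<lambda>k\<in>{..<n}. matrix T *v Xs k) u"
    using invariant orthogonal_transformation_matrix T by (intro AE_finite_allI) auto
  then have "AE p in ?M. ?risk \<theta> p = ?risk (T \<theta>) (?T p)"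
  proof eventually_elim
    case (elim p)
    obtain x Xs u where p: "p = (x, Xs, u)" by (cases p) auto
    have "l i x Xs u = l i (T x) (compose {..<n} T Xs) u" if "i < n" for i
      using elim that unfolding p matrix_vector_mul(2)[OF linear] by (simp add: compose_def)
    then show ?case
      unfolding p cond_risk_def by (simp add: inner_T compose_def)
  qed
  then have "exp_risk n PX K U l \<theta> = (\<integral>\<^sup>+p. ?risk (T \<theta>) (?T p) \<partial>?M)"
    unfolding exp_risk_eq_nn_integral_pair by (rule nn_integral_cong_AE)
  also have "\<dots> = (\<integral>\<^sup>+p. ?risk (T \<theta>) p \<partial>distr ?M ?M ?T)"
    by (rule nn_integral_distr[symmetric]) measurable
  also have "\<dots> = exp_risk n PX K U l (T \<theta>)"
    unfolding distr_T exp_risk_eq_nn_integral_pair ..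
  finally show ?thesis by simp
qed

end

definition sign_flip :: "'d set \<Rightarrow> 'd \<Rightarrow> real" where
  "sign_flip J j = (if j \<in> J then -1 else 1)"

definition reflection :: "('d::finite \<Rightarrow> real^'d) \<Rightarrow> 'd set \<Rightarrow> real^'d \<Rightarrow> real^'d" where
  "reflection v J x = (\<Sum>j\<in>UNIV. (sign_flip J j * (v j \<bullet> x)) *\<^sub>R v j)"

locale orthonormal_family =
  fixes v :: "'d::finite \<Rightarrow> real^'d"
  assumes orthonormal: "\<forall>i j. v i \<bullet> v j = (if i = j then 1 else 0)"
begin

lemma inner_v_sum: "v k \<bullet> (\<Sum>j\<in>UNIV. c j *\<^sub>R v j) = c k"
proof -
  have "(\<Sum>j\<in>UNIV. c j * (v k \<bullet> v j)) = (\<Sum>j\<in>UNIV. if k = j then c j else 0)"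
    using orthonormal by (intro sum.cong) auto
  then show ?thesis by (simp add: inner_sum_right)
qed

lemma v_expansion: "(\<Sum>j\<in>UNIV. (v j \<bullet> x) *\<^sub>R v j) = x"
proof -
  have "inj v"
    by (rule injI) (metis orthonormal zero_neq_one)
  then have card: "card (range v) = CARD('d)"
    by (simp add: card_image)
  have "independent (range v)"
  proof (rule pairwise_orthogonal_independent)
    show "pairwise orthogonal (range v)"
      using orthonormal by (auto simp: pairwise_def orthogonal_def)
    show "0 \<notin> range v"
      using orthonormal by (metis (no_types, lifting) imageE inner_zero_left zero_neq_one)
  qed
  then have span: "UNIV \<subseteq> span (range v)"
    by (intro card_ge_dim_independent) (simp_all add: card)
  define y where "y = x - (\<Sum>j\<in>UNIV. (v j \<bullet> x) *\<^sub>R v j)"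
  have "v k \<bullet> y = 0" for k
    unfolding y_def inner_diff_right inner_v_sum by simp
  then have "orthogonal y y"
    using span by (intro orthogonal_to_span[of y]) (auto simp: orthogonal_def inner_commute)
  then show ?thesis by (simp add: y_def orthogonal_def)
qed

lemma inner_eq_sum_coordinates: "x \<bullet> y = (\<Sum>j\<in>UNIV. (v j \<bullet> x) * (v j \<bullet> y))"
proof -
  have "x \<bullet> y = (\<Sum>j\<in>UNIV. (v j \<bullet> x) *\<^sub>R v j) \<bullet> y"
    unfolding v_expansion ..
  also have "\<dots> = (\<Sum>j\<in>UNIV. (v j \<bullet> x) * (v j \<bullet> y))"
    by (simp only: inner_sum_left inner_scaleR_left)
  finally show ?thesis .
qed

lemma inner_reflection: "v k \<bullet> reflection v J x = sign_flip J k * (v k \<bullet> x)"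
  unfolding reflection_def by (rule inner_v_sum)

lemma orthogonal_transformation_reflection: "orthogonal_transformation (reflection v J)"
  unfolding orthogonal_transformation_def
proof safe
  show "linear (reflection v J)"
    by (simp add: linear_iff reflection_def inner_add_right scaleR_add_left sum.distrib
        scaleR_sum_right algebra_simps)
  fix x y
  have "reflection v J x \<bullet> reflection v J y
      = (\<Sum>j\<in>UNIV. (v j \<bullet> reflection v J x) * (v j \<bullet> reflection v J y))"
    by (rule inner_eq_sum_coordinates)
  also have "\<dots> = (\<Sum>j\<in>UNIV. (v j \<bullet> x) * (v j \<bullet> y))"
    by (intro sum.cong) (auto simp: inner_reflection sign_flip_def)
  finally show "reflection v J x \<bullet> reflection v J y = x \<bullet> y"
    by (simp add: inner_eq_sum_coordinates[of x y])
qed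

lemma distr_sign_flip_coordinates:
  assumes "prob_space M" and [measurable_cong]: "sets M = sets borel"
    and indep: "prob_space.indep_vars M (\<lambda>_. borel) (\<lambda>j x. v j \<bullet> x) UNIV"
    and symm: "\<forall>j. distr M borel (\<lambda>x. v j \<bullet> x) = distr M borel (\<lambda>x. - (v j \<bullet> x))"
  shows "distr M (PiM UNIV (\<lambda>_. borel)) (\<lambda>x. \<lambda>j\<in>UNIV. sign_flip J j * (v j \<bullet> x))
       = distr M (PiM UNIV (\<lambda>_. borel)) (\<lambda>x. \<lambda>j\<in>UNIV. v j \<bullet> x)"
proof -
  interpret M: prob_space M by fact
  let ?W = "\<lambda>j x. sign_flip J j * (v j \<bullet> x)"
  have "M.indep_vars (\<lambda>_. borel) (\<lambda>j. (\<lambda>t. sign_flip J j * t) \<circ> (\<lambda>x. v j \<bullet> x)) UNIV"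
    by (rule M.indep_vars_compose[OF indep]) measurable
  then have indep_W: "M.indep_vars (\<lambda>_. borel) ?W UNIV"
    by (simp add: comp_def)
  have "distr M borel (?W j) = distr M borel (\<lambda>x. v j \<bullet> x)" for j
    using symm by (cases "j \<in> J") (simp_all add: sign_flip_def)
  moreover have "distr M (PiM UNIV (\<lambda>_. borel)) (\<lambda>x. \<lambda>j\<in>UNIV. ?W j x)
      = (\<Pi>\<^sub>M j\<in>UNIV. distr M borel (?W j))"
    using M.indep_vars_iff_distr_eq_PiM[where M'="\<lambda>_. borel" and X="?W" and I=UNIV] indep_W
    by simp
  moreover have "distr M (PiM UNIV (\<lambda>_. borel)) (\<lambda>x. \<lambda>j\<in>UNIV. v j \<bullet> x)
      = (\<Pi>\<^sub>M j\<in>UNIV. distr M borel (\<lambda>x. v j \<bullet> x))"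
    using M.indep_vars_iff_distr_eq_PiM[where M'="\<lambda>_. borel" and X="\<lambda>j x. v j \<bullet> x" and I=UNIV] indep
    by simp
  ultimately show ?thesis
    by simp
qed

lemma distr_reflection_eq:
  assumes M: "prob_space M" and sets_M[measurable_cong]: "sets M = sets borel"
    and indep: "prob_space.indep_vars M (\<lambda>_. borel) (\<lambda>j x. v j \<bullet> x) UNIV"
    and symm: "\<forall>j. distr M borel (\<lambda>x. v j \<bullet> x) = distr M borel (\<lambda>x. - (v j \<bullet> x))"
  shows "distr M borel (reflection v J) = M"
proof -
  let ?Pi = "PiM UNIV (\<lambda>_::'d. borel :: real measure)"
  define combine where "combine \<zeta> = (\<Sum>j\<in>UNIV. \<zeta> j *\<^sub>R v j)" for \<zeta> :: "'d \<Rightarrow> real"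
  have [measurable]: "combine \<in> ?Pi \<rightarrow>\<^sub>M borel"
    unfolding combine_def by measurable
  have "distr M borel (reflection v J)
      = distr (distr M ?Pi (\<lambda>x. \<lambda>j\<in>UNIV. sign_flip J j * (v j \<bullet> x))) borel combine"
    by (subst distr_distr) (auto simp: combine_def reflection_def intro!: distr_cong)
  also have "\<dots> = distr (distr M ?Pi (\<lambda>x. \<lambda>j\<in>UNIV. v j \<bullet> x)) borel combine"
    unfolding distr_sign_flip_coordinates[OF assms] ..
  also have "\<dots> = distr M borel (\<lambda>x. x)"
    by (subst distr_distr) (auto simp: combine_def v_expansion intro!: distr_cong)
  also have "\<dots> = M"
    by (rule distr_id2) (simp add: sets_M)
  finally show ?thesis .
qed

end

lemma prob_space_rademacher_law: "prob_space rademacher_law"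
  unfolding rademacher_law_def by (rule prob_space_measure_pmf)

lemma measurable_prior_sum:
  fixes v :: "'d::finite \<Rightarrow> real^'d"
  shows "(\<lambda>\<epsilon>. \<Sum>j\<in>UNIV. (\<epsilon> j * (v j \<bullet> t)) *\<^sub>R v j) \<in> PiM (UNIV :: 'd::finite set) (\<lambda>_. rademacher_law) \<rightarrow>\<^sub>M borel"
proof -
  have coordinate: "(\<lambda>\<epsilon>. \<epsilon> j) \<in> PiM (UNIV :: 'd set) (\<lambda>_. rademacher_law) \<rightarrow>\<^sub>M borel" for j
    using measurable_component_singleton[of j UNIV "\<lambda>_. rademacher_law"]
    by (rule measurable_compose) (unfold rademacher_law_def measurable_pmf_measure1, auto)
  show ?thesis
    by (intro borel_measurable_sum borel_measurable_scaleR borel_measurable_times coordinate) auto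
qed

lemma prob_space_prior_nu: "prob_space (prior_nu v t)" for v :: "'d::finite \<Rightarrow> real^'d"
  unfolding prior_nu_def
  by (intro prob_space.prob_space_distr prob_space_PiM prob_space_rademacher_law measurable_prior_sum)

lemma sets_prior_nu: "sets (prior_nu v t) = sets borel"
  unfolding prior_nu_def by simp

lemma (in orthonormal_family) AE_prior_nu_reflection:
  "AE \<theta> in prior_nu v t. \<exists>J. \<theta> = reflection v J t"
proof -
  let ?R = "PiM (UNIV :: 'd set) (\<lambda>_. rademacher_law)"
  have "AE \<epsilon> in ?R. \<forall>j\<in>UNIV. \<epsilon> j \<in> {-1, 1}"
  proof (rule AE_finite_allI)
    fix j :: 'd
    have marginal: "distr ?R rademacher_law (\<lambda>\<epsilon>. \<epsilon> j) = rademacher_law"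
      by (rule distr_PiM_component) (auto intro: prob_space_rademacher_law)
    have "AE x in distr ?R rademacher_law (\<lambda>\<epsilon>. \<epsilon> j). x \<in> {-1, 1}"
      unfolding marginal unfolding rademacher_law_def by (simp add: AE_measure_pmf_iff)
    then show "AE \<epsilon> in ?R. \<epsilon> j \<in> {-1, 1}"
      by (rule AE_distrD[rotated]) simp
  qed simp
  then have "AE \<epsilon> in ?R. \<exists>J. (\<Sum>j\<in>UNIV. (\<epsilon> j * (v j \<bullet> t)) *\<^sub>R v j) = reflection v J t"
  proof eventually_elim
    case (elim \<epsilon>)
    then have "\<epsilon> j = sign_flip {j. \<epsilon> j = -1} j" for j
      by (auto simp: sign_flip_def)
    then show ?case
      unfolding reflection_def by (intro exI[of _ "{j. \<epsilon> j = -1}"]) metis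
  qed
  moreover have "{\<theta> \<in> space borel. \<exists>J. \<theta> = reflection v J t} \<in> sets borel"
  proof -
    have "{\<theta> \<in> space borel. \<exists>J. \<theta> = reflection v J t} = range (\<lambda>J. reflection v J t)"
      by auto
    then show ?thesis
      by (simp add: borel_closed finite_imp_closed)
  qed
  ultimately show ?thesis
    unfolding prior_nu_def by (subst AE_distr_iff[OF measurable_prior_sum]) auto
qed

theorem proposition2:
  fixes n :: nat
    and PX :: "(real^'d::finite) measure"
    and K :: "real^'d \<Rightarrow> real measure"
    and sig2 :: real
    and \<theta>s :: "real^'d"
    and v :: "'d \<Rightarrow> real^'d"
    and lam :: "'d \<Rightarrow> real"
    and U :: "'u measure"
    and l :: "nat \<Rightarrow> real^'d \<Rightarrow> (nat \<Rightarrow> real^'d) \<Rightarrow> 'u \<Rightarrow> real"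
  assumes PX_prob: "prob_space PX"
    and PX_sets: "sets PX = sets borel"
    and K_kernel: "K \<in> borel \<rightarrow>\<^sub>M prob_algebra borel"
    and noise: "AE x in PX. integrable (K x) (\<lambda>e. e) \<and> (\<integral> e. e \<partial>K x) = 0
                   \<and> integrable (K x) (\<lambda>e. e^2) \<and> (\<integral> e. e^2 \<partial>K x) = sig2"
    and moments: "integrable PX (\<lambda>x. (norm x)^2)"
    and orthonormal: "\<forall>i j. v i \<bullet> v j = (if i = j then 1 else 0)"
    and eigen: "second_moment PX = (\<Sum>j\<in>UNIV. lam j *\<^sub>R outer (v j))"
    and indep: "prob_space.indep_vars PX (\<lambda>_. borel) (\<lambda>j x. v j \<bullet> x) UNIV"
    and symm: "\<forall>j. distr PX borel (\<lambda>x. v j \<bullet> x) = distr PX borel (\<lambda>x. - (v j \<bullet> x))"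
    and rule: "is_linear_rule n U l"
    and invariant: "\<forall>Q :: real^'d^'d. orthogonal_matrix Q \<longrightarrow> (\<forall>i<n.
        AE p in PX \<Otimes>\<^sub>M (PiM {..<n} (\<lambda>_. PX) \<Otimes>\<^sub>M U).
          (case p of (x, Xs, u) \<Rightarrow> l i x Xs u = l i (Q *v x) (\<lambda>k\<in>{..<n}. Q *v Xs k) u))"
  shows "excess_risk n PX K sig2 U l \<theta>s \<ge> bayes_lin_risk n PX K sig2 (prior_nu v \<theta>s) TYPE('v)"
proof -
  interpret invariant_linear_rule PX K sig2 n U l
    by (intro invariant_linear_rule.intro linear_rule.intro regression_model.intro
        linear_rule_axioms.intro invariant_linear_rule_axioms.intro)
      (fact PX_prob PX_sets K_kernel noise rule invariant)+
  interpret orthonormal_family v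
    by (rule orthonormal_family.intro) (fact orthonormal)
  let ?\<nu> = "prior_nu v \<theta>s"
  have "AE \<theta> in ?\<nu>. exp_risk n PX K U l \<theta> = exp_risk n PX K U l \<theta>s"
    using AE_prior_nu_reflection
  proof eventually_elim
    case (elim \<theta>)
    then obtain J where "\<theta> = reflection v J \<theta>s" by blast
    with exp_risk_orthogonal_invariant[OF orthogonal_transformation_reflection
        distr_reflection_eq[OF PX_prob PX_sets indep symm]]
    show ?case by simp
  qed
  then have "(\<integral>\<^sup>+\<theta>. exp_risk n PX K U l \<theta> \<partial>?\<nu>) = exp_risk n PX K U l \<theta>s"
    by (simp add: nn_integral_cong_AE prob_space.emeasure_space_1[OF prob_space_prior_nu])
  then have "avg_excess_risk n PX K sig2 ?\<nu> U l = excess_risk n PX K sig2 U l \<theta>s"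
    unfolding avg_excess_risk_def excess_risk_def by simp
  moreover have "bayes_lin_risk n PX K sig2 ?\<nu> TYPE('v) \<le> avg_excess_risk n PX K sig2 ?\<nu> U l"
    by (rule bayes_lin_risk_le_avg_excess_risk[OF prob_space_prior_nu sets_prior_nu])
  ultimately show ?thesis by simp
qed

end
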